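(* Assume (A1)–(A3). Consider mini-batch SGD with constant batch size $b_t=b$ for all $t$ and nonincreasing learning rates $\eta_{t+1}\le\eta_t$, with $\eta_t\in[\eta_{\min},\eta_{\max}]\subset[0,\frac2{\bar L})$ and $\sum_{t=0}^{T-1}\eta_t\ne0$. Then for all $T\in\mathbb N$, $$\min_{t\in[0:T-1]}\mathbb E\big[\|\nabla f(\theta_t)\|^2\big]\le\frac{2(f(\theta_0)-\underline f^\star)}{2-\bar L\eta_{\max}}B_T+\frac{\bar L\sigma^2}{2-\bar L\eta_{\max}}V_T,\qquad B_T=\frac{1}{\sum_{t=0}^{T-1}\eta_t},\quad V_T=\frac{\sum_{t=0}^{T-1}\eta_t^2}{b\sum_{t=0}^{T-1}\eta_t},$$ and, for the following learning rate schedules (with $p>0$, $E\in\mathbb N$, $K=\lceil n/b\rceil$, $0\le\eta_{\min}\le\eta_{\max}$, and $T=KE$ in the cosine case): (Constant) $\eta_t=\eta_{\max}$: $B_T\le\frac1{\eta_{\max}T}$, $V_T\le\frac{\eta_{\max}}{b}$; (Diminishing) $\eta_t=\frac{\eta_{\max}}{\sqrt{t+1}}$: $B_T\le\frac1{2\eta_{\max}(\sqrt{T+1}-1)}$, $V_T\le\frac{\eta_{\max}(1+\log T)}{2b(\sqrt{T+1}-1)}$; (Cosine) $\eta_t=\eta_{\min}+\frac{\eta_{\max}-\eta_{\min}}2\big(1+\cos\big(\lfloor t/K\rfloor\frac{\pi}{E}\big)\big)$: $B_T\le\frac2{(\eta_{\min}+\eta_{\max})T}$, $V_T\le\frac{3\eta_{\min}^2+2\eta_{\min}\eta_{\max}+3\eta_{\max}^2}{4(\eta_{\min}+\eta_{\max})b}+\frac{(\eta_{\max}-\eta_{\min})K}{bT}$;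 (Polynomial) $\eta_t=(\eta_{\max}-\eta_{\min})(1-\frac tT)^p+\eta_{\min}$: $B_T\le\frac{p+1}{(p\eta_{\min}+\eta_{\max})T}$, $V_T\le\frac{2p^2\eta_{\min}^2+2p\eta_{\min}\eta_{\max}+(p+1)\eta_{\max}^2}{(2p+1)(p\eta_{\min}+\eta_{\max})b}+\frac{(p+1)(\eta_{\max}^2-\eta_{\min}^2)}{(p\eta_{\min}+\eta_{\max})bT}$.
   Context: Let $n,d\in\mathbb N$, $f_1,\dots,f_n:\mathbb R^d\to\mathbb R$, $f=\frac1n\sum_{i=1}^nf_i$. (A1) each $f_i$ is differentiable and $L_i$-smooth ($\nabla f_i$ is $L_i$-Lipschitz, $L_i>0$), and $f_i^\star:=\inf_\theta f_i(\theta)\in\mathbb R$. (A2) $\xi$ is a random variable independent of $\theta$, and the stochastic gradient $\nabla f_\xi$ satisfies $\mathbb E_\xi[\nabla f_\xi(\theta)]=\nabla f(\theta)$ and $\mathbb E_\xi\|\nabla f_\xi(\theta)-\nabla f(\theta)\|^2\le\sigma^2$ for all $\theta$, some $\sigma\ge0$. (A3) for batch size $b$, $(\xi_1,\dots,\xi_b)$ are i.i.d. copies of $\xi$ independent of $\theta$, and $\nabla f_B(\theta)=\frac1b\sum_{i=1}^b\nabla f_{\xi_i}(\theta)$. Mini-batch SGD: from $\theta_0\in\mathbb R^d$, at step $t$ draw $\xi_t=(\xi_{t,1},\dots,\xi_{t,b_t})$ as in (A3), independent of $\theta_t$ and of earlier draws, and set $\theta_{t+1}=\theta_t-\eta_t\frac1{b_t}\sum_{i=1}^{b_t}\nabla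 f_{\xi_{t,i}}(\theta_t)$. $\mathbb E$ is total expectation. $\bar L=\frac1n\sum_iL_i$, $\underline f^\star=\frac1n\sum_if_i^\star$, $[0:N]=\{0,\dots,N\}$, $n$ is the number of training samples. *)

theory Defs
  imports "HOL-Probability.Probability"
begin

definition grad :: "('a::euclidean_space \<Rightarrow> real) \<Rightarrow> 'a \<Rightarrow> 'a" where
  "grad f x = (THE g. (f has_derivative (\<lambda>h. g \<bullet> h)) (at x))"

definition L_smooth :: "('a::euclidean_space \<Rightarrow> real) \<Rightarrow> real \<Rightarrow> bool" where
  "L_smooth f L \<longleftrightarrow> (\<forall>x. f differentiable (at x)) \<and>
     (\<forall>x y. norm (grad f x - grad f y) \<le> L * norm (x - y))"

fun sgd_iter :: "'a::real_vector \<Rightarrow> (nat \<Rightarrow> real) \<Rightarrow> nat \<Rightarrow> ('b \<Rightarrow> 'a \<Rightarrow> 'a)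
     \<Rightarrow> (nat \<Rightarrow> nat \<Rightarrow> 'w \<Rightarrow> 'b) \<Rightarrow> nat \<Rightarrow> 'w \<Rightarrow> 'a" where
  "sgd_iter \<theta>0 \<eta> b G \<xi> 0 \<omega> = \<theta>0"
| "sgd_iter \<theta>0 \<eta> b G \<xi> (Suc t) \<omega> =
     sgd_iter \<theta>0 \<eta> b G \<xi> t \<omega>
     - \<eta> t *\<^sub>R ((1 / real b) *\<^sub>R (\<Sum>i<b. G (\<xi> t i \<omega>) (sgd_iter \<theta>0 \<eta> b G \<xi> t \<omega>)))"

definition B_T :: "(nat \<Rightarrow> real) \<Rightarrow> nat \<Rightarrow> real" where
  "B_T \<eta> T = 1 / (\<Sum>t<T. \<eta> t)"

definition V_T :: "(nat \<Rightarrow> real) \<Rightarrow> nat \<Rightarrow> nat \<Rightarrow> real" where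
  "V_T \<eta> b T = (\<Sum>t<T. (\<eta> t)\<^sup>2) / (real b * (\<Sum>t<T. \<eta> t))"

definition const_lr :: "real \<Rightarrow> nat \<Rightarrow> real" where
  "const_lr hmax t = hmax"

definition dimin_lr :: "real \<Rightarrow> nat \<Rightarrow> real" where
  "dimin_lr hmax t = hmax / sqrt (real t + 1)"

definition cosine_lr :: "real \<Rightarrow> real \<Rightarrow> nat \<Rightarrow> nat \<Rightarrow> nat \<Rightarrow> real" where
  "cosine_lr hmin hmax K E t =
     hmin + (hmax - hmin) / 2 * (1 + cos (real (t div K) * pi / real E))"

definition poly_lr :: "real \<Rightarrow> real \<Rightarrow> real \<Rightarrow> nat \<Rightarrow> nat \<Rightarrow> real" where
  "poly_lr hmin hmax p T t = (hmax - hmin) * (1 - real t / real T) powr p + hmin"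

end

theory Submission
  imports Defs "HOL-Analysis.Harmonic_Numbers"
begin

text \<open>For the L-smooth average f, the descent lemma bounds f(\<theta> - \<eta> g) by
  f(\<theta>) - \<eta> \<nabla>f(\<theta>) \<bullet> g + (L \<eta>^2/2) \<parallel>g\<parallel>^2. The mini-batch gradient g is unbiased with variance at
  most \<sigma>^2/b because the b samples are independent, and the iterate \<theta>_t depends only on earlier
  samples, so it is independent of the current batch. Taking expectations,
  E f(\<theta>_(t+1)) \<le> E f(\<theta>_t) - \<eta>_t (1 - L \<eta>_t/2) E \<parallel>\<nabla>f(\<theta>_t)\<parallel>^2 + L \<eta>_t^2 \<sigma>^2/(2b).
  Telescoping down to the lower bound f* and bounding the minimum by the \<eta>-weighted average,
  using 1 - L \<eta>_t/2 \<ge> (2 - L \<eta>_max)/2, gives the main estimate.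

  The schedule bounds are elementary sum estimates: \<Sum> 1/\<surd>(t+1) \<ge> 2 (\<surd>(T+1) - 1) and
  H_T \<le> 1 + ln T; \<Sum>_(e<E) cos(e \<pi>/E) = 1 and \<Sum>_(e<E) cos^2(e \<pi>/E) \<le> (E+1)/2, by telescoping with
  2 sin(\<alpha>/2) cos(e \<alpha>); and T/(p+1) \<le> \<Sum>_(t<T) (1 - t/T)^p \<le> T/(p+1) + 1 by the mean value theorem.\<close>

section \<open>Gradients and smoothness\<close>

lemma grad_eqI:
  fixes g :: "'a::euclidean_space \<Rightarrow> real"
  assumes "(g has_derivative (\<lambda>h. v \<bullet> h)) (at x)"
  shows "grad g x = v"
  unfolding grad_def
proof (rule the_equality)
  fix w assume "(g has_derivative (\<lambda>h. w \<bullet> h)) (at x)"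
  with assms have "(\<lambda>h. w \<bullet> h) = (\<lambda>h. v \<bullet> h)"
    by (rule has_derivative_unique[rotated])
  then have "(w - v) \<bullet> (w - v) = 0"
    by (metis inner_diff_left right_minus_eq)
  then show "w = v" by simp
qed (fact assms)

lemma has_derivative_grad:
  fixes g :: "'a::euclidean_space \<Rightarrow> real"
  assumes "g differentiable (at x)"
  shows "(g has_derivative (\<lambda>h. grad g x \<bullet> h)) (at x)"
proof -
  obtain g' where g': "(g has_derivative g') (at x)"
    using assms by (auto simp: differentiable_def)
  \<comment> \<open>Riesz representation of the linear functional \<open>g'\<close>\<close>
  have "g' = (\<lambda>h. adjoint g' 1 \<bullet> h)"
    using adjoint_works[OF has_derivative_linear[OF g']] by (simp add: fun_eq_iff inner_commute)
  with g' show ?thesis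
    using grad_eqI by metis
qed

lemma L_smooth_nonneg:
  fixes g :: "'a::euclidean_space \<Rightarrow> real"
  assumes "L_smooth g L"
  shows "0 \<le> L"
proof -
  obtain e :: 'a where "e \<in> Basis" by (meson SOME_Basis)
  then have "0 \<le> L * norm (e - 0)"
    using assms unfolding L_smooth_def by (meson norm_ge_zero order_trans)
  with \<open>e \<in> Basis\<close> show ?thesis by simp
qed

lemma L_smooth_continuous_grad:
  fixes g :: "'a::euclidean_space \<Rightarrow> real"
  assumes "L_smooth g L"
  shows "continuous_on UNIV (grad g)"
proof (rule lipschitz_on_continuous_on)
  show "L-lipschitz_on UNIV (grad g)"
    using assms L_smooth_nonneg[OF assms] by (intro lipschitz_onI) (auto simp: L_smooth_def dist_norm)
qed

lemma L_smooth_upper_bound: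
  fixes g :: "'a::euclidean_space \<Rightarrow> real"
  assumes "L_smooth g L"
  shows "g y \<le> g x + grad g x \<bullet> (y - x) + L / 2 * (norm (y - x))\<^sup>2"
proof -
  define d where "d = y - x"
  define \<phi> where "\<phi> s = g (x + s *\<^sub>R d) - s * (grad g x \<bullet> d) - L / 2 * s\<^sup>2 * (norm d)\<^sup>2" for s
  have deriv: "(\<phi> has_real_derivative
      (grad g (x + s *\<^sub>R d) - grad g x) \<bullet> d - L * s * (norm d)\<^sup>2) (at s)" for s
  proof -
    have outer: "(g has_derivative (\<lambda>h. grad g (x + s *\<^sub>R d) \<bullet> h)) (at (x + s *\<^sub>R d))"
      using assms by (simp add: L_smooth_def has_derivative_grad)
    have inner: "((\<lambda>s. x + s *\<^sub>R d) has_derivative (\<lambda>t. t *\<^sub>R d)) (at s)"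
      by (auto intro!: derivative_eq_intros)
    have "((\<lambda>s. g (x + s *\<^sub>R d)) has_derivative (\<lambda>t. grad g (x + s *\<^sub>R d) \<bullet> (t *\<^sub>R d))) (at s)"
      using diff_chain_at[OF inner outer] by (simp add: o_def)
    then have "((\<lambda>s. g (x + s *\<^sub>R d)) has_real_derivative grad g (x + s *\<^sub>R d) \<bullet> d) (at s)"
      by (simp add: has_field_derivative_def mult.commute[of _ "grad g (x + s *\<^sub>R d) \<bullet> d"])
    then show ?thesis
      unfolding \<phi>_def by (auto intro!: derivative_eq_intros simp: inner_diff_left)
  qed
  have nonpos: "(grad g (x + s *\<^sub>R d) - grad g x) \<bullet> d - L * s * (norm d)\<^sup>2 \<le> 0"
    if "0 \<le> s" for s
  proof -
    have "(grad g (x + s *\<^sub>R d) - grad g x) \<bullet> d \<le> norm (grad g (x + s *\<^sub>R d) - grad g x) * norm d"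
      by (rule norm_cauchy_schwarz)
    also have "\<dots> \<le> L * norm (s *\<^sub>R d) * norm d"
      using assms unfolding L_smooth_def
      by (intro mult_right_mono) (metis add_diff_cancel_left' norm_ge_zero)+
    also have "\<dots> = L * s * (norm d)\<^sup>2"
      using that by (simp add: power2_eq_square)
    finally show ?thesis by simp
  qed
  have "\<phi> 1 \<le> \<phi> 0"
  proof (rule DERIV_nonpos_imp_nonincreasing[of 0 1 \<phi>])
    fix s :: real assume "0 \<le> s"
    then show "\<exists>y. (\<phi> has_real_derivative y) (at s) \<and> y \<le> 0"
      using deriv[of s] nonpos[of s] by blast
  qed simp
  then show ?thesis by (simp add: \<phi>_def d_def)
qed

lemma L_smooth_average:
  fixes fs :: "nat \<Rightarrow> 'a::euclidean_space \<Rightarrow> real"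
  assumes "\<forall>i<n. L_smooth (fs i) (L i)"
  shows "L_smooth (\<lambda>\<theta>. (1 / real n) * (\<Sum>i<n. fs i \<theta>)) ((1 / real n) * (\<Sum>i<n. L i))"
proof -
  have deriv: "((\<lambda>\<theta>. (1 / real n) * (\<Sum>i<n. fs i \<theta>)) has_derivative
           (\<lambda>h. ((1 / real n) *\<^sub>R (\<Sum>i<n. grad (fs i) x)) \<bullet> h)) (at x)" for x
  proof -
    have "((\<lambda>\<theta>. (1 / real n) * (\<Sum>i<n. fs i \<theta>)) has_derivative
           (\<lambda>h. (1 / real n) * (\<Sum>i<n. grad (fs i) x \<bullet> h))) (at x)"
      using assms by (intro has_derivative_mult_right has_derivative_sum)
        (auto intro: has_derivative_grad simp: L_smooth_def)
    then show ?thesis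
      by (simp add: inner_sum_left)
  qed
  have grad: "grad (\<lambda>\<theta>. (1 / real n) * (\<Sum>i<n. fs i \<theta>)) x = (1 / real n) *\<^sub>R (\<Sum>i<n. grad (fs i) x)"
    for x by (rule grad_eqI[OF deriv])
  have "norm ((1 / real n) *\<^sub>R (\<Sum>i<n. grad (fs i) x - grad (fs i) y))
        \<le> (1 / real n) * (\<Sum>i<n. L i * norm (x - y))" for x y
  proof -
    have "norm (\<Sum>i<n. grad (fs i) x - grad (fs i) y) \<le> (\<Sum>i<n. L i * norm (x - y))"
      using assms by (intro sum_norm_le) (auto simp: L_smooth_def)
    then show ?thesis by (simp add: divide_right_mono)
  qed
  then show ?thesis
    unfolding L_smooth_def grad using deriv
    by (auto simp: differentiable_def sum_subtractf scaleR_diff_right sum_distrib_right)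
qed

section \<open>Expectations and independence\<close>

lemma (in prob_space) expectation_inner_indep_zero_mean:
  fixes X Y :: "'a \<Rightarrow> 'c::euclidean_space"
  assumes indep: "indep_var borel X borel Y"
    and X: "integrable M X" and Y: "integrable M Y" and mean: "expectation X = 0"
  shows "integrable M (\<lambda>\<omega>. X \<omega> \<bullet> Y \<omega>)" and "expectation (\<lambda>\<omega>. X \<omega> \<bullet> Y \<omega>) = 0"
proof -
  have coord: "integrable M (\<lambda>\<omega>. (X \<omega> \<bullet> e) * (Y \<omega> \<bullet> e)) \<and>
      expectation (\<lambda>\<omega>. (X \<omega> \<bullet> e) * (Y \<omega> \<bullet> e)) = 0" for e
  proof -
    have ind: "indep_var borel (\<lambda>\<omega>. X \<omega> \<bullet> e) borel (\<lambda>\<omega>. Y \<omega> \<bullet> e)"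
      using indep_var_compose[OF indep, of "\<lambda>x. x \<bullet> e" borel "\<lambda>x. x \<bullet> e" borel] by (simp add: o_def)
    have X_e: "integrable M (\<lambda>\<omega>. X \<omega> \<bullet> e)" and Y_e: "integrable M (\<lambda>\<omega>. Y \<omega> \<bullet> e)"
      using X Y by simp_all
    have "expectation (\<lambda>\<omega>. X \<omega> \<bullet> e) = 0"
      using X mean by simp
    then show ?thesis
      using indep_var_lebesgue_integral[OF ind X_e Y_e] indep_var_integrable[OF ind X_e Y_e] by simp
  qed
  have "(\<lambda>\<omega>. X \<omega> \<bullet> Y \<omega>) = (\<lambda>\<omega>. \<Sum>e\<in>Basis. (X \<omega> \<bullet> e) * (Y \<omega> \<bullet> e))"
    by (rule ext, rule euclidean_inner)
  then show "integrable M (\<lambda>\<omega>. X \<omega> \<bullet> Y \<omega>)" and "expectation (\<lambda>\<omega>. X \<omega> \<bullet> Y \<omega>) = 0"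
    using coord by (simp_all add: Bochner_Integration.integral_sum)
qed

lemma (in prob_space) expectation_norm_sum_indep_zero_mean:
  fixes Z :: "'i \<Rightarrow> 'a \<Rightarrow> 'c::euclidean_space"
  assumes I: "finite I"
    and indep: "\<And>i j. i \<in> I \<Longrightarrow> j \<in> I \<Longrightarrow> i \<noteq> j \<Longrightarrow> indep_var borel (Z i) borel (Z j)"
    and int: "\<And>i. i \<in> I \<Longrightarrow> integrable M (Z i)"
    and mean: "\<And>i. i \<in> I \<Longrightarrow> expectation (Z i) = 0"
    and sq_int: "\<And>i. i \<in> I \<Longrightarrow> integrable M (\<lambda>\<omega>. (norm (Z i \<omega>))\<^sup>2)"
  shows "integrable M (\<lambda>\<omega>. (norm (\<Sum>i\<in>I. Z i \<omega>))\<^sup>2)"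
    and "expectation (\<lambda>\<omega>. (norm (\<Sum>i\<in>I. Z i \<omega>))\<^sup>2) = (\<Sum>i\<in>I. expectation (\<lambda>\<omega>. (norm (Z i \<omega>))\<^sup>2))"
proof -
  have expand: "(norm (\<Sum>i\<in>I. Z i \<omega>))\<^sup>2 = (\<Sum>i\<in>I. \<Sum>j\<in>I. Z i \<omega> \<bullet> Z j \<omega>)" for \<omega>
    unfolding power2_norm_eq_inner inner_sum_left by (simp only: inner_sum_right)
  have diag: "(\<lambda>\<omega>. Z i \<omega> \<bullet> Z i \<omega>) = (\<lambda>\<omega>. (norm (Z i \<omega>))\<^sup>2)" for i
    by (simp add: power2_norm_eq_inner)
  have int_ij: "integrable M (\<lambda>\<omega>. Z i \<omega> \<bullet> Z j \<omega>)" if "i \<in> I" "j \<in> I" for i j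
    using that expectation_inner_indep_zero_mean(1)[OF indep int int mean] sq_int diag[of i]
    by (cases "i = j") simp_all
  have exp_ij: "expectation (\<lambda>\<omega>. Z i \<omega> \<bullet> Z j \<omega>) =
      (if i = j then expectation (\<lambda>\<omega>. (norm (Z i \<omega>))\<^sup>2) else 0)" if "i \<in> I" "j \<in> I" for i j
    using that expectation_inner_indep_zero_mean(2)[OF indep int int mean] diag[of i]
    by (cases "i = j") simp_all
  show "integrable M (\<lambda>\<omega>. (norm (\<Sum>i\<in>I. Z i \<omega>))\<^sup>2)"
    unfolding expand by (intro Bochner_Integration.integrable_sum int_ij)
  have "expectation (\<lambda>\<omega>. (norm (\<Sum>i\<in>I. Z i \<omega>))\<^sup>2)
      = (\<Sum>i\<in>I. \<Sum>j\<in>I. expectation (\<lambda>\<omega>. Z i \<omega> \<bullet> Z j \<omega>))"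
    unfolding expand
    by (simp add: Bochner_Integration.integral_sum Bochner_Integration.integrable_sum int_ij)
  also have "\<dots> = (\<Sum>i\<in>I. expectation (\<lambda>\<omega>. (norm (Z i \<omega>))\<^sup>2))"
    using I by (simp add: exp_ij cong: sum.cong)
  finally show "expectation (\<lambda>\<omega>. (norm (\<Sum>i\<in>I. Z i \<omega>))\<^sup>2)
      = (\<Sum>i\<in>I. expectation (\<lambda>\<omega>. (norm (Z i \<omega>))\<^sup>2))" .
qed

lemma (in prob_space) nn_integral_le_expectation:
  assumes "integrable M R" and "\<And>\<omega>. f \<omega> \<le> R \<omega>" and "\<And>\<omega>. c \<le> R \<omega>"
  shows "(\<integral>\<^sup>+\<omega>. ennreal (f \<omega> - c) \<partial>M) \<le> ennreal (expectation R - c)"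
proof -
  have "(\<integral>\<^sup>+\<omega>. ennreal (f \<omega> - c) \<partial>M) \<le> (\<integral>\<^sup>+\<omega>. ennreal (R \<omega> - c) \<partial>M)"
    using assms(2) by (intro nn_integral_mono ennreal_leI) (simp add: algebra_simps)
  also have "\<dots> = ennreal (expectation R - c)"
    using assms(1,3) by (subst nn_integral_eq_integral) (auto simp: prob_space)
  finally show ?thesis .
qed

lemma (in prob_space) nn_integral_indep_var_pair:
  assumes indep: "indep_var S X T Y" and h: "h \<in> borel_measurable (S \<Otimes>\<^sub>M T)"
  shows "(\<integral>\<^sup>+\<omega>. h (X \<omega>, Y \<omega>) \<partial>M) = (\<integral>\<^sup>+x. \<integral>\<^sup>+y. h (x, y) \<partial>distr M T Y \<partial>distr M S X)"
proof -
  have X: "random_variable S X" and Y: "random_variable T Y"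
    using indep by (rule indep_var_rv1, rule indep_var_rv2)
  interpret X: prob_space "distr M S X" using X by (rule prob_space_distr)
  interpret Y: prob_space "distr M T Y" using Y by (rule prob_space_distr)
  interpret XY: pair_prob_space "distr M S X" "distr M T Y" ..
  have "sets (distr M S X \<Otimes>\<^sub>M distr M T Y) = sets (S \<Otimes>\<^sub>M T)"
    by (intro sets_pair_measure_cong) simp_all
  then have h': "h \<in> borel_measurable (distr M S X \<Otimes>\<^sub>M distr M T Y)"
    using h by (simp cong: measurable_cong_sets)
  have "(\<integral>\<^sup>+\<omega>. h (X \<omega>, Y \<omega>) \<partial>M) = (\<integral>\<^sup>+z. h z \<partial>distr M (S \<Otimes>\<^sub>M T) (\<lambda>\<omega>. (X \<omega>, Y \<omega>)))"
    using X Y h by (intro nn_integral_distr[symmetric] measurable_Pair) simp_all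
  also have "distr M (S \<Otimes>\<^sub>M T) (\<lambda>\<omega>. (X \<omega>, Y \<omega>)) = distr M S X \<Otimes>\<^sub>M distr M T Y"
    using indep by (simp add: indep_var_distribution_eq)
  also have "(\<integral>\<^sup>+z. h z \<partial>(distr M S X \<Otimes>\<^sub>M distr M T Y))
      = (\<integral>\<^sup>+x. \<integral>\<^sup>+y. h (x, y) \<partial>distr M T Y \<partial>distr M S X)"
    using h' by (rule Y.nn_integral_fst[symmetric])
  finally show ?thesis .
qed

section \<open>Mini-batch SGD\<close>

lemma sgd_iter_cong:
  assumes "\<forall>s<t. \<forall>i<b. \<xi>\<^sub>1 s i \<omega>\<^sub>1 = \<xi>\<^sub>2 s i \<omega>\<^sub>2"
  shows "sgd_iter \<theta>0 \<eta> b G \<xi>\<^sub>1 t \<omega>\<^sub>1 = sgd_iter \<theta>0 \<eta> b G \<xi>\<^sub>2 t \<omega>\<^sub>2"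
  using assms
proof (induction t)
  case (Suc t)
  then have "sgd_iter \<theta>0 \<eta> b G \<xi>\<^sub>1 t \<omega>\<^sub>1 = sgd_iter \<theta>0 \<eta> b G \<xi>\<^sub>2 t \<omega>\<^sub>2" by simp
  moreover have "\<forall>i<b. \<xi>\<^sub>1 t i \<omega>\<^sub>1 = \<xi>\<^sub>2 t i \<omega>\<^sub>2"
    using Suc.prems by simp
  ultimately show ?case by (auto intro!: sum.cong)
qed simp

lemma sgd_iter_eq_past_samples:
  "sgd_iter \<theta>0 \<eta> b G \<xi> t \<omega> =
     sgd_iter \<theta>0 \<eta> b G (\<lambda>s i x. x (s, i)) t (\<lambda>k\<in>{..<t} \<times> {..<b}. (\<lambda>(s, i). \<xi> s i) k \<omega>)"
  by (rule sgd_iter_cong) simp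

lemma telescoping_le:
  fixes E c k :: "nat \<Rightarrow> 'a::ordered_comm_monoid_add"
  assumes "\<And>t. t < T \<Longrightarrow> E (Suc t) + c t \<le> E t + k t"
  shows "E T + (\<Sum>t<T. c t) \<le> E 0 + (\<Sum>t<T. k t)"
  using assms
proof (induction T)
  case (Suc T)
  have "E (Suc T) + (\<Sum>t<Suc T. c t) = (E (Suc T) + c T) + (\<Sum>t<T. c t)"
    by (simp add: ac_simps)
  also have "\<dots> \<le> (E T + k T) + (\<Sum>t<T. c t)"
    using Suc.prems[of T] by (intro add_right_mono) simp
  also have "\<dots> = (E T + (\<Sum>t<T. c t)) + k T"
    by (simp add: ac_simps)
  also have "\<dots> \<le> (E 0 + (\<Sum>t<T. k t)) + k T"
    using Suc by (intro add_right_mono) simp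
  finally show ?case
    by (simp add: ac_simps)
qed simp

lemma ennreal_le_divideI:
  assumes "0 < r" "0 \<le> x" "ennreal r * m \<le> ennreal x"
  shows "m \<le> ennreal (x / r)"
proof -
  have "ennreal r * m \<le> ennreal r * ennreal (x / r)"
    using assms by (simp add: ennreal_mult[symmetric])
  then show ?thesis
    using assms(1) by (simp add: ennreal_mult_le_mult_iff)
qed

locale minibatch_sgd = prob_space P
  for P :: "'w measure" and D :: "'b measure" and b :: nat
    and G :: "'b \<Rightarrow> 'a::euclidean_space \<Rightarrow> 'a" and \<xi> :: "nat \<Rightarrow> nat \<Rightarrow> 'w \<Rightarrow> 'b"
    and F :: "'a \<Rightarrow> real" and L Fmin \<sigma> :: real +
  assumes batch_size: "b \<ge> 1"
    and G_measurable: "(\<lambda>(x, \<theta>). G x \<theta>) \<in> borel_measurable (D \<Otimes>\<^sub>M borel)"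
    and unbiased: "\<forall>\<theta>. integrable D (\<lambda>x. G x \<theta>) \<and> (\<integral>x. G x \<theta> \<partial>D) = grad F \<theta>"
    and variance: "\<forall>\<theta>. integrable D (\<lambda>x. (norm (G x \<theta> - grad F \<theta>))\<^sup>2)
                 \<and> (\<integral>x. (norm (G x \<theta> - grad F \<theta>))\<^sup>2 \<partial>D) \<le> \<sigma>\<^sup>2"
    and indep: "indep_vars (\<lambda>_. D) (\<lambda>(t, i). \<xi> t i) (UNIV \<times> {..<b})"
    and identically_distributed: "\<forall>t. \<forall>i<b. distr P D (\<xi> t i) = D"
    and smooth: "L_smooth F L"
    and lower_bound: "\<forall>x. Fmin \<le> F x"
begin

lemma sample_measurable: "i < b \<Longrightarrow> \<xi> t i \<in> measurable P D"
  using indep unfolding indep_vars_def by auto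

lemma measurable_G:
  assumes "X \<in> measurable M D" "Y \<in> borel_measurable M"
  shows "(\<lambda>\<omega>. G (X \<omega>) (Y \<omega>)) \<in> borel_measurable M"
  using measurable_compose[OF measurable_Pair[OF assms] G_measurable] by simp

lemma F_measurable [measurable]: "F \<in> borel_measurable borel"
proof -
  have "F differentiable_on UNIV"
    using smooth by (auto simp: L_smooth_def differentiable_on_def differentiable_at_withinI)
  then show ?thesis
    by (intro borel_measurable_continuous_onI differentiable_imp_continuous_on)
qed

lemma grad_F_measurable [measurable]: "grad F \<in> borel_measurable borel"
  using L_smooth_continuous_grad[OF smooth] by (rule borel_measurable_continuous_onI)

lemma integrable_sample:
  fixes \<phi> :: "'b \<Rightarrow> 'c::{banach, second_countable_topology}"
  assumes "i < b" "\<phi> \<in> borel_measurable D" "integrable D \<phi>"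
  shows "integrable P (\<lambda>\<omega>. \<phi> (\<xi> t i \<omega>))"
  using assms identically_distributed integrable_distr_eq[OF sample_measurable[OF assms(1)] assms(2)]
  by simp

lemma integral_sample:
  fixes \<phi> :: "'b \<Rightarrow> 'c::{banach, second_countable_topology}"
  assumes "i < b" "\<phi> \<in> borel_measurable D"
  shows "(\<integral>\<omega>. \<phi> (\<xi> t i \<omega>) \<partial>P) = (\<integral>x. \<phi> x \<partial>D)"
  using assms identically_distributed integral_distr[OF sample_measurable[OF assms(1)] assms(2)]
  by simp

lemma sgd_iter_measurable:
  assumes "\<forall>s<t. \<forall>i<b. \<xi>' s i \<in> measurable M D"
  shows "sgd_iter \<theta>0 \<eta> b G \<xi>' t \<in> borel_measurable M"
  using assms
proof (induction t)
  case 0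
  have "sgd_iter \<theta>0 \<eta> b G \<xi>' 0 = (\<lambda>_. \<theta>0)"
    by (simp add: fun_eq_iff)
  then show ?case by simp
next
  case (Suc t)
  have "sgd_iter \<theta>0 \<eta> b G \<xi>' (Suc t) = (\<lambda>\<omega>. sgd_iter \<theta>0 \<eta> b G \<xi>' t \<omega> -
      \<eta> t *\<^sub>R ((1 / real b) *\<^sub>R (\<Sum>i<b. G (\<xi>' t i \<omega>) (sgd_iter \<theta>0 \<eta> b G \<xi>' t \<omega>))))"
    by (simp add: fun_eq_iff)
  moreover have "(\<lambda>\<omega>. \<Sum>i<b. G (\<xi>' t i \<omega>) (sgd_iter \<theta>0 \<eta> b G \<xi>' t \<omega>)) \<in> borel_measurable M"
    using Suc by (intro borel_measurable_sum measurable_G) auto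
  ultimately show ?case
    using Suc by (simp del: sgd_iter.simps)
qed

lemma indep_batch_samples:
  assumes "i < b" "j < b" "i \<noteq> j"
  shows "indep_var D (\<xi> t i) D (\<xi> t j)"
proof -
  have "indep_var (PiM {(t, i)} (\<lambda>_. D)) (\<lambda>\<omega>. \<lambda>k\<in>{(t, i)}. (\<lambda>(t, i). \<xi> t i) k \<omega>)
                  (PiM {(t, j)} (\<lambda>_. D)) (\<lambda>\<omega>. \<lambda>k\<in>{(t, j)}. (\<lambda>(t, i). \<xi> t i) k \<omega>)"
    using assms by (intro indep_var_restrict[OF indep]) auto
  from indep_var_compose[OF this measurable_component_singleton measurable_component_singleton]
  have "indep_var D ((\<lambda>x. x (t, i)) \<circ> (\<lambda>\<omega>. \<lambda>k\<in>{(t, i)}. (\<lambda>(t, i). \<xi> t i) k \<omega>))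
                  D ((\<lambda>x. x (t, j)) \<circ> (\<lambda>\<omega>. \<lambda>k\<in>{(t, j)}. (\<lambda>(t, i). \<xi> t i) k \<omega>))"
    by simp
  moreover have "(\<lambda>x. x (t, k)) \<circ> (\<lambda>\<omega>. \<lambda>k'\<in>{(t, k)}. (\<lambda>(t, i). \<xi> t i) k' \<omega>) = \<xi> t k" for k
    by (simp add: fun_eq_iff)
  ultimately show ?thesis by simp
qed

lemma sample_noise_moments:
  assumes "i < b"
  shows "integrable P (\<lambda>\<omega>. G (\<xi> t i \<omega>) \<theta> - grad F \<theta>)"
    and "expectation (\<lambda>\<omega>. G (\<xi> t i \<omega>) \<theta> - grad F \<theta>) = 0"
    and "integrable P (\<lambda>\<omega>. (norm (G (\<xi> t i \<omega>) \<theta> - grad F \<theta>))\<^sup>2)"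
    and "expectation (\<lambda>\<omega>. (norm (G (\<xi> t i \<omega>) \<theta> - grad F \<theta>))\<^sup>2) \<le> \<sigma>\<^sup>2"
proof -
  have G_slice: "(\<lambda>x. G x \<theta>) \<in> borel_measurable D"
    by (rule measurable_G) simp_all
  have "integrable P (\<lambda>\<omega>. G (\<xi> t i \<omega>) \<theta>)"
    using assms G_slice unbiased by (intro integrable_sample) auto
  moreover have "expectation (\<lambda>\<omega>. G (\<xi> t i \<omega>) \<theta>) = grad F \<theta>"
    using integral_sample[OF assms G_slice] unbiased by simp
  ultimately show "integrable P (\<lambda>\<omega>. G (\<xi> t i \<omega>) \<theta> - grad F \<theta>)"
    and "expectation (\<lambda>\<omega>. G (\<xi> t i \<omega>) \<theta> - grad F \<theta>) = 0"
    by (simp_all add: prob_space)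
  have sq: "(\<lambda>x. (norm (G x \<theta> - grad F \<theta>))\<^sup>2) \<in> borel_measurable D"
    using G_slice by measurable
  show "integrable P (\<lambda>\<omega>. (norm (G (\<xi> t i \<omega>) \<theta> - grad F \<theta>))\<^sup>2)"
    using assms sq variance by (intro integrable_sample) auto
  show "expectation (\<lambda>\<omega>. (norm (G (\<xi> t i \<omega>) \<theta> - grad F \<theta>))\<^sup>2) \<le> \<sigma>\<^sup>2"
    using integral_sample[OF assms sq] variance by simp
qed

definition minibatch_grad :: "nat \<Rightarrow> 'a \<Rightarrow> 'w \<Rightarrow> 'a" where
  "minibatch_grad t \<theta> \<omega> = (1 / real b) *\<^sub>R (\<Sum>i<b. G (\<xi> t i \<omega>) \<theta>)"

lemma minibatch_gradient_moments:
  shows "integrable P (minibatch_grad t \<theta>)" and "expectation (minibatch_grad t \<theta>) = grad F \<theta>"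
    and "integrable P (\<lambda>\<omega>. (norm (minibatch_grad t \<theta> \<omega> - grad F \<theta>))\<^sup>2)"
    and "expectation (\<lambda>\<omega>. (norm (minibatch_grad t \<theta> \<omega> - grad F \<theta>))\<^sup>2) \<le> \<sigma>\<^sup>2 / real b"
proof -
  define Z where "Z i = (\<lambda>\<omega>. G (\<xi> t i \<omega>) \<theta> - grad F \<theta>)" for i
  have Z_moments: "integrable P (Z i)" "expectation (Z i) = 0"
    "integrable P (\<lambda>\<omega>. (norm (Z i \<omega>))\<^sup>2)" "expectation (\<lambda>\<omega>. (norm (Z i \<omega>))\<^sup>2) \<le> \<sigma>\<^sup>2"
    if "i < b" for i
    using sample_noise_moments[OF that, of t \<theta>] by (simp_all add: Z_def)
  have Z_indep: "indep_var borel (Z i) borel (Z j)" if "i < b" "j < b" "i \<noteq> j" for i j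
  proof -
    have "(\<lambda>x. G x \<theta> - grad F \<theta>) \<in> borel_measurable D"
      using measurable_G[of "\<lambda>x. x" D "\<lambda>_. \<theta>"] by measurable
    from indep_var_compose[OF indep_batch_samples[OF that] this this]
    show ?thesis by (simp add: Z_def o_def)
  qed
  have noise: "minibatch_grad t \<theta> \<omega> - grad F \<theta> = (1 / real b) *\<^sub>R (\<Sum>i<b. Z i \<omega>)" for \<omega>
    using batch_size
    by (simp add: minibatch_grad_def Z_def sum_subtractf scaleR_diff_right sum_constant_scaleR)
  then have grad_eq: "minibatch_grad t \<theta> = (\<lambda>\<omega>. grad F \<theta> + (1 / real b) *\<^sub>R (\<Sum>i<b. Z i \<omega>))"
    by (simp add: fun_eq_iff algebra_simps)
  have noise_int: "integrable P (\<lambda>\<omega>. (1 / real b) *\<^sub>R (\<Sum>i<b. Z i \<omega>))"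
    using Z_moments(1) by (intro integrable_scaleR_right Bochner_Integration.integrable_sum) auto
  then show "integrable P (minibatch_grad t \<theta>)"
    unfolding grad_eq by simp
  have "expectation (\<lambda>\<omega>. (1 / real b) *\<^sub>R (\<Sum>i<b. Z i \<omega>)) = 0"
    using Z_moments(1,2) by (simp add: Bochner_Integration.integral_sum)
  then show "expectation (minibatch_grad t \<theta>) = grad F \<theta>"
    unfolding grad_eq using noise_int by (simp add: prob_space)
  have norm_noise: "(norm (minibatch_grad t \<theta> \<omega> - grad F \<theta>))\<^sup>2
      = (1 / real b)\<^sup>2 * (norm (\<Sum>i<b. Z i \<omega>))\<^sup>2" for \<omega>
    unfolding noise by (simp add: power_divide)
  note sum_moments = expectation_norm_sum_indep_zero_mean[of "{..<b}" Z]
  show "integrable P (\<lambda>\<omega>. (norm (minibatch_grad t \<theta> \<omega> - grad F \<theta>))\<^sup>2)"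
    unfolding norm_noise using sum_moments(1) Z_indep Z_moments by auto
  have "expectation (\<lambda>\<omega>. (norm (minibatch_grad t \<theta> \<omega> - grad F \<theta>))\<^sup>2)
      = (1 / real b)\<^sup>2 * (\<Sum>i<b. expectation (\<lambda>\<omega>. (norm (Z i \<omega>))\<^sup>2))"
    unfolding norm_noise using sum_moments(2) Z_indep Z_moments by auto
  also have "\<dots> \<le> (1 / real b)\<^sup>2 * (\<Sum>i<b. \<sigma>\<^sup>2)"
    using Z_moments(4) by (intro mult_left_mono sum_mono) auto
  also have "\<dots> = \<sigma>\<^sup>2 / real b"
    using batch_size by (simp add: power2_eq_square)
  finally show "expectation (\<lambda>\<omega>. (norm (minibatch_grad t \<theta> \<omega> - grad F \<theta>))\<^sup>2) \<le> \<sigma>\<^sup>2 / real b" .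
qed

lemma expected_descent_at:
  fixes t :: nat and \<theta> :: 'a and \<eta> :: real
  assumes step_size: "0 \<le> \<eta> * (1 - L * \<eta> / 2)"
  shows "(\<integral>\<^sup>+\<omega>. ennreal (F (\<theta> - \<eta> *\<^sub>R minibatch_grad t \<theta> \<omega>) - Fmin) \<partial>P)
       + ennreal (\<eta> * (1 - L * \<eta> / 2) * (norm (grad F \<theta>))\<^sup>2)
     \<le> ennreal (F \<theta> - Fmin + L * \<eta>\<^sup>2 * \<sigma>\<^sup>2 / (2 * real b))"
proof -
  define g where "g = minibatch_grad t \<theta>"
  define \<gamma> where "\<gamma> = grad F \<theta>"
  note moments = minibatch_gradient_moments[of t \<theta>, folded g_def \<gamma>_def]
  \<comment> \<open>the descent-lemma bound, with \<open>\<parallel>g\<parallel>\<^sup>2\<close> expanded around its mean \<open>\<gamma>\<close>\<close>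
  define R where "R \<omega> = F \<theta> - \<eta> * (\<gamma> \<bullet> g \<omega>)
      + L * \<eta>\<^sup>2 / 2 * ((norm \<gamma>)\<^sup>2 + 2 * (\<gamma> \<bullet> (g \<omega> - \<gamma>)) + (norm (g \<omega> - \<gamma>))\<^sup>2)" for \<omega>
  have F_le_R: "F (\<theta> - \<eta> *\<^sub>R g \<omega>) \<le> R \<omega>" for \<omega>
  proof -
    have "(norm (g \<omega>))\<^sup>2 = (norm \<gamma>)\<^sup>2 + 2 * (\<gamma> \<bullet> (g \<omega> - \<gamma>)) + (norm (g \<omega> - \<gamma>))\<^sup>2"
      by (simp add: power2_norm_eq_inner algebra_simps inner_commute)
    then show ?thesis
      using L_smooth_upper_bound[OF smooth, of "\<theta> - \<eta> *\<^sub>R g \<omega>" \<theta>]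
      by (simp add: R_def \<gamma>_def power_mult_distrib)
  qed
  have Fmin_le_R: "Fmin \<le> R \<omega>" for \<omega>
    using F_le_R[of \<omega>] lower_bound by (meson order_trans)
  have R_int: "integrable P R"
    unfolding R_def using moments by simp
  have "expectation R = F \<theta> - \<eta> * (norm \<gamma>)\<^sup>2
      + L * \<eta>\<^sup>2 / 2 * ((norm \<gamma>)\<^sup>2 + expectation (\<lambda>\<omega>. (norm (g \<omega> - \<gamma>))\<^sup>2))"
    unfolding R_def using moments by (simp add: prob_space power2_norm_eq_inner)
  also have "\<dots> \<le> F \<theta> - \<eta> * (1 - L * \<eta> / 2) * (norm \<gamma>)\<^sup>2 + L * \<eta>\<^sup>2 / 2 * (\<sigma>\<^sup>2 / real b)"
    using mult_left_mono[OF moments(4), of "L * \<eta>\<^sup>2 / 2"] L_smooth_nonneg[OF smooth]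
    by (simp add: algebra_simps power2_eq_square)
  finally have R_exp: "expectation R - Fmin + \<eta> * (1 - L * \<eta> / 2) * (norm \<gamma>)\<^sup>2
      \<le> F \<theta> - Fmin + L * \<eta>\<^sup>2 * \<sigma>\<^sup>2 / (2 * real b)"
    by simp
  have "Fmin \<le> expectation R"
    using integral_mono[OF integrable_const R_int, of Fmin] Fmin_le_R by (simp add: prob_space)
  then have "ennreal (expectation R - Fmin) + ennreal (\<eta> * (1 - L * \<eta> / 2) * (norm \<gamma>)\<^sup>2)
      \<le> ennreal (F \<theta> - Fmin + L * \<eta>\<^sup>2 * \<sigma>\<^sup>2 / (2 * real b))"
    using R_exp step_size
    by (simp add: ennreal_plus[symmetric] del: ennreal_plus) (rule ennreal_leI; linarith)
  moreover have "(\<integral>\<^sup>+\<omega>. ennreal (F (\<theta> - \<eta> *\<^sub>R g \<omega>) - Fmin) \<partial>P) \<le> ennreal (expectation R - Fmin)"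
    using R_int F_le_R Fmin_le_R by (rule nn_integral_le_expectation)
  ultimately show ?thesis
    unfolding g_def \<gamma>_def by (meson add_right_mono order_trans)
qed

lemma sgd_iter_Suc_minibatch_grad:
  "sgd_iter \<theta>0 \<eta> b G \<xi> (Suc t) \<omega> =
     sgd_iter \<theta>0 \<eta> b G \<xi> t \<omega> - \<eta> t *\<^sub>R minibatch_grad t (sgd_iter \<theta>0 \<eta> b G \<xi> t \<omega>) \<omega>"
  by (simp add: minibatch_grad_def)

text \<open>The batch of step \<open>t\<close> is indexed by the pairs \<open>(t, i)\<close>, so that it lives in the same kind of
  product space as the earlier samples, as \<open>indep_var\<close> requires.\<close>

definition batch :: "nat \<Rightarrow> 'w \<Rightarrow> nat \<times> nat \<Rightarrow> 'b" where
  "batch t \<omega> = (\<lambda>k\<in>{t} \<times> {..<b}. (\<lambda>(s, i). \<xi> s i) k \<omega>)"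

lemma batch_measurable: "batch t \<in> measurable P (PiM ({t} \<times> {..<b}) (\<lambda>_. D))"
  unfolding batch_def by (intro measurable_restrict) (auto intro: sample_measurable)

text \<open>The iterate \<open>\<theta>\<^sub>t\<close> is a function of the samples drawn before step \<open>t\<close>, hence independent of
  the batch drawn at step \<open>t\<close>; so \<open>\<theta>\<^sub>t\<close> may be frozen while averaging over that batch.\<close>

lemma nn_integral_iterate_batch_le:
  fixes H :: "'a \<Rightarrow> (nat \<times> nat \<Rightarrow> 'b) \<Rightarrow> ennreal"
  assumes H: "(\<lambda>z. H (fst z) (snd z)) \<in> borel_measurable (borel \<Otimes>\<^sub>M PiM ({t} \<times> {..<b}) (\<lambda>_. D))"
    and \<phi>: "\<phi> \<in> borel_measurable borel"
    and bound: "\<And>\<theta>. (\<integral>\<^sup>+\<omega>. H \<theta> (batch t \<omega>) \<partial>P) \<le> \<phi> \<theta>"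
  shows "(\<integral>\<^sup>+\<omega>. H (sgd_iter \<theta>0 \<eta> b G \<xi> t \<omega>) (batch t \<omega>) \<partial>P)
      \<le> (\<integral>\<^sup>+\<omega>. \<phi> (sgd_iter \<theta>0 \<eta> b G \<xi> t \<omega>) \<partial>P)"
proof -
  define past where "past = {..<t} \<times> {..<b}"
  define X where "X \<omega> = (\<lambda>k\<in>past. (\<lambda>(s, i). \<xi> s i) k \<omega>)" for \<omega>
  define iterate where "iterate x = sgd_iter \<theta>0 \<eta> b G (\<lambda>s i x. x (s, i)) t x" for x :: "nat \<times> nat \<Rightarrow> 'b"
  have iterate_X: "sgd_iter \<theta>0 \<eta> b G \<xi> t \<omega> = iterate (X \<omega>)" for \<omega>
    unfolding iterate_def X_def past_def by (rule sgd_iter_eq_past_samples)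
  have indep_X_batch: "indep_var (PiM past (\<lambda>_. D)) X (PiM ({t} \<times> {..<b}) (\<lambda>_. D)) (batch t)"
    unfolding X_def batch_def past_def by (intro indep_var_restrict[OF indep]) auto
  have X_meas: "X \<in> measurable P (PiM past (\<lambda>_. D))"
    unfolding X_def past_def by (intro measurable_restrict) (auto intro: sample_measurable)
  have [measurable]: "iterate \<in> borel_measurable (PiM past (\<lambda>_. D))"
    unfolding iterate_def by (rule sgd_iter_measurable) (auto simp: past_def)
  have "(\<lambda>z. (iterate (fst z), snd z)) \<in> measurable (PiM past (\<lambda>_. D) \<Otimes>\<^sub>M PiM ({t} \<times> {..<b}) (\<lambda>_. D))
      (borel \<Otimes>\<^sub>M PiM ({t} \<times> {..<b}) (\<lambda>_. D))"
    by measurable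
  from measurable_compose[OF this H] have "(\<lambda>z. H (iterate (fst z)) (snd z))
      \<in> borel_measurable (PiM past (\<lambda>_. D) \<Otimes>\<^sub>M PiM ({t} \<times> {..<b}) (\<lambda>_. D))"
    by simp
  from nn_integral_indep_var_pair[OF indep_X_batch this]
  have "(\<integral>\<^sup>+\<omega>. H (iterate (X \<omega>)) (batch t \<omega>) \<partial>P)
      = (\<integral>\<^sup>+x. \<integral>\<^sup>+y. H (iterate x) y \<partial>distr P (PiM ({t} \<times> {..<b}) (\<lambda>_. D)) (batch t)
           \<partial>distr P (PiM past (\<lambda>_. D)) X)"
    by simp
  also have "\<dots> \<le> (\<integral>\<^sup>+x. \<phi> (iterate x) \<partial>distr P (PiM past (\<lambda>_. D)) X)"
  proof (intro nn_integral_mono)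
    fix x
    have "(\<integral>\<^sup>+y. H (iterate x) y \<partial>distr P (PiM ({t} \<times> {..<b}) (\<lambda>_. D)) (batch t))
        = (\<integral>\<^sup>+\<omega>. H (iterate x) (batch t \<omega>) \<partial>P)"
      using measurable_Pair2[OF H, of "iterate x"] batch_measurable by (intro nn_integral_distr) auto
    then show "(\<integral>\<^sup>+y. H (iterate x) y \<partial>distr P (PiM ({t} \<times> {..<b}) (\<lambda>_. D)) (batch t)) \<le> \<phi> (iterate x)"
      using bound by simp
  qed
  also have "\<dots> = (\<integral>\<^sup>+\<omega>. \<phi> (iterate (X \<omega>)) \<partial>P)"
    using X_meas \<phi> by (intro nn_integral_distr) simp_all
  finally show ?thesis
    unfolding iterate_X .
qed

lemma expected_descent_step:
  assumes step_size: "0 \<le> \<eta> t * (1 - L * \<eta> t / 2)"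
  shows "(\<integral>\<^sup>+\<omega>. ennreal (F (sgd_iter \<theta>0 \<eta> b G \<xi> (Suc t) \<omega>) - Fmin) \<partial>P)
      + ennreal (\<eta> t * (1 - L * \<eta> t / 2))
        * (\<integral>\<^sup>+\<omega>. ennreal ((norm (grad F (sgd_iter \<theta>0 \<eta> b G \<xi> t \<omega>)))\<^sup>2) \<partial>P)
    \<le> (\<integral>\<^sup>+\<omega>. ennreal (F (sgd_iter \<theta>0 \<eta> b G \<xi> t \<omega>) - Fmin) \<partial>P)
      + ennreal (L * (\<eta> t)\<^sup>2 * \<sigma>\<^sup>2 / (2 * real b))"
proof -
  define c where "c = \<eta> t * (1 - L * \<eta> t / 2)"
  define K where "K = L * (\<eta> t)\<^sup>2 * \<sigma>\<^sup>2 / (2 * real b)"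
  define H where "H \<theta> y = ennreal (F (\<theta> - \<eta> t *\<^sub>R ((1 / real b) *\<^sub>R (\<Sum>i<b. G (y (t, i)) \<theta>))) - Fmin)
      + ennreal (c * (norm (grad F \<theta>))\<^sup>2)" for \<theta> and y :: "nat \<times> nat \<Rightarrow> 'b"
  have H_batch: "H \<theta> (batch t \<omega>) = ennreal (F (\<theta> - \<eta> t *\<^sub>R minibatch_grad t \<theta> \<omega>) - Fmin)
      + ennreal (c * (norm (grad F \<theta>))\<^sup>2)" for \<theta> \<omega>
    by (simp add: H_def batch_def minibatch_grad_def)
  have [measurable]: "(\<lambda>z. \<Sum>i<b. G (snd z (t, i)) (fst z))
      \<in> borel_measurable (borel \<Otimes>\<^sub>M PiM ({t} \<times> {..<b}) (\<lambda>_. D))"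
    by (intro borel_measurable_sum measurable_G measurable_compose[OF measurable_snd]
        measurable_component_singleton) auto
  have [measurable]: "sgd_iter \<theta>0 \<eta> b G \<xi> s \<in> borel_measurable P" for s
    by (intro sgd_iter_measurable) (auto intro: sample_measurable)
  have "(\<integral>\<^sup>+\<omega>. ennreal (F (sgd_iter \<theta>0 \<eta> b G \<xi> (Suc t) \<omega>) - Fmin) \<partial>P)
      + ennreal c * (\<integral>\<^sup>+\<omega>. ennreal ((norm (grad F (sgd_iter \<theta>0 \<eta> b G \<xi> t \<omega>)))\<^sup>2) \<partial>P)
      = (\<integral>\<^sup>+\<omega>. ennreal (F (sgd_iter \<theta>0 \<eta> b G \<xi> (Suc t) \<omega>) - Fmin)
          + ennreal c * ennreal ((norm (grad F (sgd_iter \<theta>0 \<eta> b G \<xi> t \<omega>)))\<^sup>2) \<partial>P)"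
    by (simp add: nn_integral_add nn_integral_cmult del: sgd_iter.simps)
  also have "\<dots> = (\<integral>\<^sup>+\<omega>. H (sgd_iter \<theta>0 \<eta> b G \<xi> t \<omega>) (batch t \<omega>) \<partial>P)"
    using step_size
    by (simp add: H_batch c_def sgd_iter_Suc_minibatch_grad ennreal_mult del: sgd_iter.simps)
  also have "\<dots> \<le> (\<integral>\<^sup>+\<omega>. ennreal (F (sgd_iter \<theta>0 \<eta> b G \<xi> t \<omega>) - Fmin) + ennreal K \<partial>P)"
  proof (rule nn_integral_iterate_batch_le)
    show "(\<lambda>z. H (fst z) (snd z)) \<in> borel_measurable (borel \<Otimes>\<^sub>M PiM ({t} \<times> {..<b}) (\<lambda>_. D))"
      unfolding H_def by measurable
    fix \<theta>
    have "(\<integral>\<^sup>+\<omega>. H \<theta> (batch t \<omega>) \<partial>P)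
        = (\<integral>\<^sup>+\<omega>. ennreal (F (\<theta> - \<eta> t *\<^sub>R minibatch_grad t \<theta> \<omega>) - Fmin) \<partial>P)
          + ennreal (c * (norm (grad F \<theta>))\<^sup>2)"
      using borel_measurable_integrable[OF minibatch_gradient_moments(1)]
      by (simp add: H_batch nn_integral_add emeasure_space_1)
    also have "\<dots> \<le> ennreal (F \<theta> - Fmin + K)"
      unfolding c_def K_def using step_size by (rule expected_descent_at)
    also have "\<dots> = ennreal (F \<theta> - Fmin) + ennreal K"
      using lower_bound L_smooth_nonneg[OF smooth] by (simp add: K_def ennreal_plus)
    finally show "(\<integral>\<^sup>+\<omega>. H \<theta> (batch t \<omega>) \<partial>P) \<le> ennreal (F \<theta> - Fmin) + ennreal K" .
  qed measurable
  also have "\<dots> = (\<integral>\<^sup>+\<omega>. ennreal (F (sgd_iter \<theta>0 \<eta> b G \<xi> t \<omega>) - Fmin) \<partial>P) + ennreal K"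
    by (simp add: nn_integral_add emeasure_space_1 del: sgd_iter.simps)
  finally show ?thesis
    unfolding c_def K_def .
qed

lemma expected_descent_sum:
  assumes step_size: "\<forall>t. 0 \<le> \<eta> t * (1 - L * \<eta> t / 2)"
  shows "(\<Sum>t<T. ennreal (\<eta> t * (1 - L * \<eta> t / 2))
          * (\<integral>\<^sup>+\<omega>. ennreal ((norm (grad F (sgd_iter \<theta>0 \<eta> b G \<xi> t \<omega>)))\<^sup>2) \<partial>P))
    \<le> ennreal (F \<theta>0 - Fmin + L * \<sigma>\<^sup>2 / (2 * real b) * (\<Sum>t<T. (\<eta> t)\<^sup>2))"
proof -
  define E where "E t = (\<integral>\<^sup>+\<omega>. ennreal (F (sgd_iter \<theta>0 \<eta> b G \<xi> t \<omega>) - Fmin) \<partial>P)" for t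
  define C where "C = (\<Sum>t<T. ennreal (\<eta> t * (1 - L * \<eta> t / 2))
          * (\<integral>\<^sup>+\<omega>. ennreal ((norm (grad F (sgd_iter \<theta>0 \<eta> b G \<xi> t \<omega>)))\<^sup>2) \<partial>P))"
  have L: "0 \<le> L"
    using L_smooth_nonneg[OF smooth] .
  have "C \<le> E T + C"
    by (rule add_increasing[OF zero_le order_refl])
  also have "\<dots> \<le> E 0 + (\<Sum>t<T. ennreal (L * (\<eta> t)\<^sup>2 * \<sigma>\<^sup>2 / (2 * real b)))"
    unfolding E_def C_def using step_size by (intro telescoping_le expected_descent_step) simp
  also have "\<dots> = ennreal (F \<theta>0 - Fmin) + ennreal (\<Sum>t<T. L * (\<eta> t)\<^sup>2 * \<sigma>\<^sup>2 / (2 * real b))"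
    using L by (subst sum_ennreal) (auto simp: E_def emeasure_space_1)
  also have "\<dots> = ennreal (F \<theta>0 - Fmin + L * \<sigma>\<^sup>2 / (2 * real b) * (\<Sum>t<T. (\<eta> t)\<^sup>2))"
    using lower_bound L
    by (subst ennreal_plus[symmetric])
      (auto intro!: sum_nonneg simp: sum_distrib_left sum_divide_distrib mult_ac)
  finally show ?thesis
    unfolding C_def .
qed

lemma min_expected_grad_norm_le:
  assumes lr: "\<forall>t. 0 \<le> \<eta> t \<and> \<eta> t \<le> \<eta>max" and \<eta>max: "L * \<eta>max < 2"
    and S: "(\<Sum>t<T. \<eta> t) \<noteq> 0"
  shows "(MIN t\<in>{..<T}. \<integral>\<^sup>+\<omega>. ennreal ((norm (grad F (sgd_iter \<theta>0 \<eta> b G \<xi> t \<omega>)))\<^sup>2) \<partial>P)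
     \<le> ennreal (2 * (F \<theta>0 - Fmin) / (2 - L * \<eta>max) * B_T \<eta> T
                + L * \<sigma>\<^sup>2 / (2 - L * \<eta>max) * V_T \<eta> b T)"
proof -
  define e where "e t = (\<integral>\<^sup>+\<omega>. ennreal ((norm (grad F (sgd_iter \<theta>0 \<eta> b G \<xi> t \<omega>)))\<^sup>2) \<partial>P)" for t
  define S where "S = (\<Sum>t<T. \<eta> t)"
  define u where "u = 2 - L * \<eta>max"
  define X where "X = F \<theta>0 - Fmin + L * \<sigma>\<^sup>2 / (2 * real b) * (\<Sum>t<T. (\<eta> t)\<^sup>2)"
  have S_pos: "0 < S"
    using S lr unfolding S_def by (metis order_le_less sum_nonneg)
  have u_pos: "0 < u"
    using \<eta>max by (simp add: u_def)
  have X_nonneg: "0 \<le> X"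
    unfolding X_def using lower_bound L_smooth_nonneg[OF smooth]
    by (intro add_nonneg_nonneg mult_nonneg_nonneg sum_nonneg) auto
  have rate: "u / 2 * \<eta> t \<le> \<eta> t * (1 - L * \<eta> t / 2)" for t
  proof -
    have "L * \<eta> t * \<eta> t \<le> L * \<eta>max * \<eta> t"
      using lr L_smooth_nonneg[OF smooth] by (intro mult_right_mono mult_left_mono) auto
    then show ?thesis
      by (simp add: u_def field_simps)
  qed
  have weights: "ennreal (u / 2 * S) = (\<Sum>t<T. ennreal (u / 2 * \<eta> t))"
    unfolding S_def sum_distrib_left using u_pos lr by (intro sum_ennreal[symmetric]) simp
  have "ennreal (u / 2 * S) * (MIN t\<in>{..<T}. e t) \<le> (\<Sum>t<T. ennreal (u / 2 * \<eta> t) * e t)"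
    unfolding weights sum_distrib_right by (intro sum_mono mult_left_mono Min_le) auto
  also have "\<dots> \<le> (\<Sum>t<T. ennreal (\<eta> t * (1 - L * \<eta> t / 2)) * e t)"
    by (intro sum_mono mult_right_mono ennreal_leI rate) simp
  also have "\<dots> \<le> ennreal X"
    unfolding e_def X_def using lr u_pos
    by (intro expected_descent_sum allI order_trans[OF _ rate]) simp
  finally have "(MIN t\<in>{..<T}. e t) \<le> ennreal (X / (u / 2 * S))"
    using u_pos S_pos X_nonneg by (intro ennreal_le_divideI) simp_all
  also have "X / (u / 2 * S) = 2 * (F \<theta>0 - Fmin) / u * (1 / S)
      + L * \<sigma>\<^sup>2 / u * ((\<Sum>t<T. (\<eta> t)\<^sup>2) / (real b * S))"
    using u_pos S_pos batch_size by (simp add: X_def field_simps)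
  finally show ?thesis
    unfolding e_def B_T_def V_T_def S_def u_def .
qed

end

section \<open>Learning-rate schedules\<close>

lemma B_T_const_lr: "B_T (const_lr h) T = 1 / (h * real T)"
  by (simp add: B_T_def const_lr_def mult.commute)

lemma V_T_const_lr:
  assumes "(\<Sum>t<T. const_lr h t) \<noteq> 0"
  shows "V_T (const_lr h) b T = h / real b"
  using assms by (simp add: V_T_def const_lr_def power2_eq_square)

lemma sum_inverse_sqrt_ge: "2 * (sqrt (real T + 1) - 1) \<le> (\<Sum>t<T. 1 / sqrt (real t + 1))"
proof (induction T)
  case (Suc T)
  let ?a = "sqrt (real T + 2)" and ?c = "sqrt (real T + 1)"
  have "(?a - ?c) * (?a + ?c) = 1"
    by (simp add: algebra_simps)
  moreover have "0 < ?a + ?c"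
    by (simp add: add_pos_pos)
  ultimately have "?a - ?c = 1 / (?a + ?c)"
    by (simp add: eq_divide_eq)
  also have "\<dots> \<le> 1 / (2 * ?c)"
    by (intro divide_left_mono mult_pos_pos add_pos_pos) auto
  finally have "2 * (?a - ?c) \<le> 1 / ?c"
    by (simp add: field_simps)
  with Suc show ?case
    by (simp add: add.commute)
qed simp

lemma harm_le_one_plus_ln:
  assumes "1 \<le> n"
  shows "harm n \<le> 1 + ln (real n)"
  using euler_mascheroni_sequence_decreasing[of 1 n] assms by (simp add: harm_def)

lemma dimin_lr_bounds:
  assumes "0 \<le> h" and "(\<Sum>t<T. dimin_lr h t) \<noteq> 0"
  shows "B_T (dimin_lr h) T \<le> 1 / (2 * h * (sqrt (real T + 1) - 1))"
    and "V_T (dimin_lr h) b T \<le> h * (1 + ln (real T)) / (2 * real b * (sqrt (real T + 1) - 1))"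
proof -
  define S where "S = (\<Sum>t<T. 1 / sqrt (real t + 1))"
  have sum_lr: "(\<Sum>t<T. dimin_lr h t) = h * S"
    by (simp add: S_def dimin_lr_def sum_distrib_left)
  with assms have h: "0 < h"
    by auto
  have T: "1 \<le> T"
    using assms(2) by (cases T) auto
  have gap: "0 < sqrt (real T + 1) - 1"
    using T by simp
  have S: "2 * (sqrt (real T + 1) - 1) \<le> S"
    unfolding S_def by (rule sum_inverse_sqrt_ge)
  then have S_pos: "0 < S"
    using gap by (meson less_le_trans mult_pos_pos zero_less_numeral)
  show "B_T (dimin_lr h) T \<le> 1 / (2 * h * (sqrt (real T + 1) - 1))"
    unfolding B_T_def sum_lr using h gap S S_pos
    by (intro divide_left_mono) (auto simp: mult.assoc intro!: mult_pos_pos)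
  have sum_sq: "(\<Sum>t<T. (dimin_lr h t)\<^sup>2) = h\<^sup>2 * harm T"
    by (simp add: dimin_lr_def harm_altdef sum_distrib_left power_divide field_simps)
  have "h\<^sup>2 * harm T / (real b * (h * S)) \<le> h\<^sup>2 * (1 + ln (real T)) / (real b * (h * (2 * (sqrt (real T + 1) - 1))))"
    using harm_le_one_plus_ln[OF T] h gap S S_pos harm_nonneg[of T]
    by (cases "b = 0") (auto intro!: frac_le mult_left_mono mult_pos_pos)
  also have "\<dots> = h * (1 + ln (real T)) / (2 * real b * (sqrt (real T + 1) - 1))"
    using h by (simp add: power2_eq_square)
  finally show "V_T (dimin_lr h) b T \<le> h * (1 + ln (real T)) / (2 * real b * (sqrt (real T + 1) - 1))"
    unfolding V_T_def sum_lr sum_sq .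
qed

lemma sum_cos_arith_progression:
  fixes \<alpha> :: real
  shows "2 * sin (\<alpha> / 2) * (\<Sum>e<E. cos (real e * \<alpha>)) = sin ((real E - 1 / 2) * \<alpha>) + sin (\<alpha> / 2)"
proof (induction E)
  case 0
  have "(real 0 - 1 / 2) * \<alpha> = - (\<alpha> / 2)"
    by simp
  then show ?case
    by (simp only: sin_minus) simp
next
  case (Suc E)
  have "sin ((real (Suc E) - 1 / 2) * \<alpha>) - sin ((real E - 1 / 2) * \<alpha>)
      = sin (real E * \<alpha> + \<alpha> / 2) - sin (real E * \<alpha> - \<alpha> / 2)"
    by (simp add: algebra_simps)
  also have "\<dots> = 2 * sin (\<alpha> / 2) * cos (real E * \<alpha>)"
    by (simp add: sin_add sin_diff)
  finally show ?case
    using Suc.IH by (simp add: distrib_left)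
qed

lemma sum_cos_pi_div:
  assumes "1 \<le> E"
  shows "(\<Sum>e<E. cos (real e * pi / real E)) = 1"
proof -
  let ?\<alpha> = "pi / real E"
  have "0 < sin (?\<alpha> / 2)"
    using assms by (intro sin_gt_zero) (auto simp: field_simps)
  moreover have "sin ((real E - 1 / 2) * ?\<alpha>) = sin (?\<alpha> / 2)"
  proof -
    have "(real E - 1 / 2) * ?\<alpha> = pi - ?\<alpha> / 2"
      using assms by (simp add: field_simps)
    then show ?thesis by simp
  qed
  ultimately show ?thesis
    using sum_cos_arith_progression[of ?\<alpha> E] by (simp add: times_divide_eq_right)
qed

lemma sum_cos_2pi_div:
  assumes "2 \<le> E"
  shows "(\<Sum>e<E. cos (real e * (2 * pi / real E))) = 0"
proof -
  let ?\<alpha> = "2 * pi / real E"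
  have "0 < sin (?\<alpha> / 2)"
    using assms pi_gt3 by (intro sin_gt_zero) (auto simp: field_simps)
  moreover have "sin ((real E - 1 / 2) * ?\<alpha>) = - sin (?\<alpha> / 2)"
  proof -
    have "(real E - 1 / 2) * ?\<alpha> = - (?\<alpha> / 2) + 2 * pi"
      using assms by (simp add: field_simps)
    then show ?thesis by (simp add: sin_add)
  qed
  ultimately show ?thesis
    using sum_cos_arith_progression[of ?\<alpha> E] by simp
qed

lemma sum_cos_sq_pi_div_le:
  assumes "1 \<le> E"
  shows "(\<Sum>e<E. (cos (real e * pi / real E))\<^sup>2) \<le> (real E + 1) / 2"
proof (cases "E = 1")
  case False
  then have "2 \<le> E"
    using assms by simp
  have "(cos (real e * pi / real E))\<^sup>2 = 1 / 2 + cos (real e * (2 * pi / real E)) / 2" for e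
  proof -
    have "cos (real e * (2 * pi / real E)) = cos (2 * (real e * pi / real E))"
      by (simp add: mult_ac)
    then show ?thesis
      unfolding cos_double_cos by (simp add: field_simps)
  qed
  then have "(\<Sum>e<E. (cos (real e * pi / real E))\<^sup>2) = real E / 2"
    using sum_cos_2pi_div[OF \<open>2 \<le> E\<close>] by (simp add: sum.distrib sum_divide_distrib[symmetric])
  then show ?thesis by simp
qed simp

lemma sum_div_blocks:
  fixes g :: "nat \<Rightarrow> 'a::comm_semiring_1"
  shows "(\<Sum>t<K * E. g (t div K)) = of_nat K * (\<Sum>e<E. g e)"
proof (induction E)
  case (Suc E)
  have "(\<Sum>t<K * Suc E. g (t div K))
      = (\<Sum>t\<in>{0..<K * E}. g (t div K)) + (\<Sum>t\<in>{K * E..<K * E + K}. g (t div K))"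
    by (simp add: lessThan_atLeast0 sum.atLeastLessThan_concat[symmetric] algebra_simps)
  also have "(\<Sum>t\<in>{K * E..<K * E + K}. g (t div K)) = (\<Sum>t\<in>{K * E..<K * E + K}. g E)"
    by (intro sum.cong refl) (auto intro!: arg_cong[where f = g] div_nat_eqI simp: algebra_simps)
  finally show ?case
    using Suc by (simp add: lessThan_atLeast0 algebra_simps)
qed simp

lemma cosine_lr_sums:
  fixes hmin hmax :: real
  assumes "1 \<le> E"
  defines "a \<equiv> (hmin + hmax) / 2" and "c \<equiv> (hmax - hmin) / 2"
  shows "(\<Sum>t<K * E. cosine_lr hmin hmax K E t) = real K * (real E * a + c)"
    and "(\<Sum>t<K * E. (cosine_lr hmin hmax K E t)\<^sup>2)
           \<le> real K * (real E * a\<^sup>2 + 2 * a * c + c\<^sup>2 * ((real E + 1) / 2))"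
proof -
  define g where "g e = a + c * cos (real e * pi / real E)" for e
  have lr: "cosine_lr hmin hmax K E t = g (t div K)" for t
    by (simp add: cosine_lr_def g_def a_def c_def field_simps)
  show "(\<Sum>t<K * E. cosine_lr hmin hmax K E t) = real K * (real E * a + c)"
    unfolding lr sum_div_blocks using sum_cos_pi_div[OF assms(1)]
    by (simp add: g_def sum.distrib sum_distrib_left[symmetric])
  have "(\<Sum>e<E. (g e)\<^sup>2) = real E * a\<^sup>2 + 2 * a * c * (\<Sum>e<E. cos (real e * pi / real E))
      + c\<^sup>2 * (\<Sum>e<E. (cos (real e * pi / real E))\<^sup>2)"
    by (simp add: g_def power2_eq_square algebra_simps sum.distrib sum_distrib_left)
  also have "\<dots> \<le> real E * a\<^sup>2 + 2 * a * c + c\<^sup>2 * ((real E + 1) / 2)"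
    using sum_cos_pi_div[OF assms(1)] mult_left_mono[OF sum_cos_sq_pi_div_le[OF assms(1)], of "c\<^sup>2"]
    by simp
  finally show "(\<Sum>t<K * E. (cosine_lr hmin hmax K E t)\<^sup>2)
      \<le> real K * (real E * a\<^sup>2 + 2 * a * c + c\<^sup>2 * ((real E + 1) / 2))"
    unfolding lr using sum_div_blocks[of "\<lambda>e. (g e)\<^sup>2" K E] by (simp add: mult_left_mono)
qed

lemma cosine_ratio_le:
  fixes hmin hmax E :: real
  assumes h: "0 \<le> hmin" "hmin \<le> hmax" "0 < hmin + hmax" and E: "0 < E"
  defines "a \<equiv> (hmin + hmax) / 2" and "c \<equiv> (hmax - hmin) / 2"
  shows "(E * a\<^sup>2 + 2 * a * c + c\<^sup>2 * ((E + 1) / 2)) / (E * a + c)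
    \<le> (3 * hmin\<^sup>2 + 2 * hmin * hmax + 3 * hmax\<^sup>2) / (4 * (hmin + hmax)) + (hmax - hmin) / E"
proof -
  have a: "0 < a" and c: "0 \<le> c" "c \<le> a"
    using h by (simp_all add: a_def c_def)
  have "a * c * E \<le> 2 * a * a * E"
    using a c E by (intro mult_right_mono) (auto simp: mult_left_mono)
  moreover have "0 \<le> c * c * E" "0 \<le> 4 * a * c"
    using a c E by auto
  ultimately have "0 \<le> 2 * a\<^sup>2 * E + c\<^sup>2 * E + 4 * a * c - a * c * E"
    by (simp only: power2_eq_square)
  then have "0 \<le> c * (2 * a\<^sup>2 * E + c\<^sup>2 * E + 4 * a * c - a * c * E)"
    using c by simp
  then have "(E * a\<^sup>2 + 2 * a * c + c\<^sup>2 * ((E + 1) / 2)) * (2 * a * E)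
      \<le> ((2 * a\<^sup>2 + c\<^sup>2) * E + 4 * a * c) * (E * a + c)"
    by (simp add: power2_eq_square algebra_simps)
  then have "(E * a\<^sup>2 + 2 * a * c + c\<^sup>2 * ((E + 1) / 2)) / (E * a + c)
      \<le> (2 * a\<^sup>2 + c\<^sup>2) / (2 * a) + 2 * c / E"
    using a c E by (simp add: divide_simps add_pos_nonneg) (simp add: algebra_simps)
  also have "(2 * a\<^sup>2 + c\<^sup>2) / (2 * a) = (3 * hmin\<^sup>2 + 2 * hmin * hmax + 3 * hmax\<^sup>2) / (4 * (hmin + hmax))"
    using a by (simp add: a_def c_def field_simps power2_eq_square)
  also have "2 * c / E = (hmax - hmin) / E"
    using E by (simp add: c_def field_simps)
  finally show ?thesis .
qed

lemma cosine_lr_bounds: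
  assumes K: "1 \<le> K" and h: "0 \<le> hmin" "hmin \<le> hmax"
    and sum_nonzero: "(\<Sum>t<K * E. cosine_lr hmin hmax K E t) \<noteq> 0"
  shows "B_T (cosine_lr hmin hmax K E) (K * E) \<le> 2 / ((hmin + hmax) * real (K * E))"
    and "V_T (cosine_lr hmin hmax K E) b (K * E)
           \<le> (3 * hmin\<^sup>2 + 2 * hmin * hmax + 3 * hmax\<^sup>2) / (4 * (hmin + hmax) * real b)
             + (hmax - hmin) * real K / (real b * real (K * E))"
proof -
  define a where "a = (hmin + hmax) / 2"
  define c where "c = (hmax - hmin) / 2"
  have E: "1 \<le> E"
    using sum_nonzero by (cases E) auto
  note sums = cosine_lr_sums[OF E, of hmin hmax K, folded a_def c_def]
  have c: "0 \<le> c" "c \<le> a"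
    using h by (auto simp: a_def c_def)
  have a: "0 < a"
    using sum_nonzero sums(1) c by (cases "a = 0") auto
  have KE: "0 < real K" "0 < real E"
    using K E by auto
  show "B_T (cosine_lr hmin hmax K E) (K * E) \<le> 2 / ((hmin + hmax) * real (K * E))"
  proof -
    have "1 / (real K * (real E * a + c)) \<le> 1 / (real K * (real E * a))"
      using a c KE by (intro divide_left_mono mult_left_mono mult_pos_pos add_pos_nonneg) auto
    then show ?thesis
      unfolding B_T_def sums(1) by (simp add: a_def field_simps)
  qed
  show "V_T (cosine_lr hmin hmax K E) b (K * E)
      \<le> (3 * hmin\<^sup>2 + 2 * hmin * hmax + 3 * hmax\<^sup>2) / (4 * (hmin + hmax) * real b)
        + (hmax - hmin) * real K / (real b * real (K * E))"
  proof (cases "b = 0")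
    case False
    have "V_T (cosine_lr hmin hmax K E) b (K * E)
        \<le> real K * (real E * a\<^sup>2 + 2 * a * c + c\<^sup>2 * ((real E + 1) / 2)) / (real b * (real K * (real E * a + c)))"
      unfolding V_T_def sums(1) using sums(2) False KE a c
      by (intro divide_right_mono) (auto intro!: mult_nonneg_nonneg add_nonneg_nonneg)
    also have "\<dots> = (real E * a\<^sup>2 + 2 * a * c + c\<^sup>2 * ((real E + 1) / 2)) / (real E * a + c) / real b"
      using KE by simp
    also have "\<dots> \<le> ((3 * hmin\<^sup>2 + 2 * hmin * hmax + 3 * hmax\<^sup>2) / (4 * (hmin + hmax))
        + (hmax - hmin) / real E) / real b"
      using h a KE unfolding a_def c_def by (intro divide_right_mono cosine_ratio_le) simp_all
    also have "\<dots> = (3 * hmin\<^sup>2 + 2 * hmin * hmax + 3 * hmax\<^sup>2) / (4 * (hmin + hmax) * real b)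
        + (hmax - hmin) * real K / (real b * real (K * E))"
      using KE by (simp add: add_divide_distrib)
    finally show ?thesis .
  qed (simp add: V_T_def)
qed

lemma powr_Suc_diff_bounds:
  fixes y q :: real
  assumes y: "0 \<le> y" and q: "0 < q"
  shows "(q + 1) * y powr q \<le> (y + 1) powr (q + 1) - y powr (q + 1)
       \<and> (y + 1) powr (q + 1) - y powr (q + 1) \<le> (q + 1) * (y + 1) powr q"
proof (cases "y = 0")
  case False
  have "\<exists>z. y < z \<and> z < y + 1 \<and> (y + 1) powr (q + 1) - y powr (q + 1) = (y + 1 - y) * ((q + 1) * z powr q)"
  proof (rule MVT2)
    fix x assume "y \<le> x"
    then have "0 < x"
      using y False by simp
    then show "((\<lambda>x. x powr (q + 1)) has_real_derivative (q + 1) * x powr q) (at x)"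
      using has_real_derivative_powr[of x "q + 1"] by simp
  qed simp
  then obtain z where z: "y < z" "z < y + 1" "(y + 1) powr (q + 1) - y powr (q + 1) = (q + 1) * z powr q"
    by auto
  then show ?thesis
    using y q by (auto intro!: mult_left_mono powr_mono2)
qed (use q in simp)

lemma sum_powr_bounds:
  fixes q :: real
  assumes q: "0 < q" and T: "1 \<le> T"
  shows "real T / (q + 1) \<le> (\<Sum>t<T. (1 - real t / real T) powr q)"
    and "(\<Sum>t<T. (1 - real t / real T) powr q) \<le> real T / (q + 1) + 1"
proof -
  define x where "x t = real T - real t" for t :: nat
  have T_pos: "0 < real T"
    using T by simp
  have "(1 - real t / real T) powr q = x t powr q / real T powr q" if "t < T" for t
  proof -
    have "1 - real t / real T = x t / real T"
      using T_pos by (simp add: x_def field_simps)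
    then show ?thesis
      using that T_pos by (simp add: x_def powr_divide)
  qed
  then have sum_eq: "(\<Sum>t<T. (1 - real t / real T) powr q) = (\<Sum>t<T. x t powr q) / real T powr q"
    by (simp add: sum_divide_distrib)
  have diff: "(q + 1) * x (Suc t) powr q \<le> x t powr (q + 1) - x (Suc t) powr (q + 1)
      \<and> x t powr (q + 1) - x (Suc t) powr (q + 1) \<le> (q + 1) * x t powr q" if "t < T" for t
  proof -
    have "x (Suc t) + 1 = x t"
      by (simp add: x_def)
    with powr_Suc_diff_bounds[of "x (Suc t)" q] that q show ?thesis
      by (simp add: x_def)
  qed
  have telescope: "(\<Sum>t<T. f (x t) - f (x (Suc t))) = f (real T) - f 0" for f :: "real \<Rightarrow> real"
    by (subst sum_lessThan_telescope') (simp add: x_def)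
  have tel: "(\<Sum>t<T. x t powr (q + 1) - x (Suc t) powr (q + 1)) = real T powr (q + 1)"
    using telescope[of "\<lambda>y. y powr (q + 1)"] by simp
  have lower: "real T powr (q + 1) \<le> (q + 1) * (\<Sum>t<T. x t powr q)"
    unfolding tel[symmetric] sum_distrib_left using diff by (intro sum_mono) auto
  have "(q + 1) * (\<Sum>t<T. x (Suc t) powr q) \<le> real T powr (q + 1)"
    unfolding tel[symmetric] sum_distrib_left using diff by (intro sum_mono) auto
  moreover have "(\<Sum>t<T. x t powr q) = (\<Sum>t<T. x (Suc t) powr q) + real T powr q"
    using telescope[of "\<lambda>y. y powr q"] q by (simp add: sum_subtractf)
  ultimately have upper: "(\<Sum>t<T. x t powr q) \<le> real T powr (q + 1) / (q + 1) + real T powr q"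
    using q by (simp add: field_simps)
  have T_powr: "real T powr (q + 1) = real T * real T powr q"
    using T_pos by (simp add: powr_add)
  show "real T / (q + 1) \<le> (\<Sum>t<T. (1 - real t / real T) powr q)"
    unfolding sum_eq using lower q T_pos unfolding T_powr by (simp add: field_simps)
  show "(\<Sum>t<T. (1 - real t / real T) powr q) \<le> real T / (q + 1) + 1"
    unfolding sum_eq using upper q T_pos unfolding T_powr by (simp add: field_simps)
qed

lemma poly_lr_variance_identity:
  fixes hmin hmax p M :: real
  assumes "0 < p" "0 < M" "1 \<le> T" "b \<noteq> 0"
  defines "d \<equiv> hmax - hmin"
  shows "(d\<^sup>2 * (real T / (2 * p + 1) + 1) + 2 * d * hmin * (real T / (p + 1) + 1) + real T * hmin\<^sup>2)
           / (real b * (real T * M / (p + 1)))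
         = (2 * p\<^sup>2 * hmin\<^sup>2 + 2 * p * hmin * hmax + (p + 1) * hmax\<^sup>2) / ((2 * p + 1) * M * real b)
           + (p + 1) * (hmax\<^sup>2 - hmin\<^sup>2) / (M * real b * real T)"
proof -
  define r where "r = 2 * p + 1"
  define s where "s = p + 1"
  have "0 < r" "0 < s"
    using assms(1) by (simp_all add: r_def s_def)
  then have "(d\<^sup>2 * (real T / r + 1) + 2 * d * hmin * (real T / s + 1) + real T * hmin\<^sup>2)
        / (real b * (real T * M / s))
      = (s * r * hmin\<^sup>2 + r * (2 * d * hmin) + s * d\<^sup>2) / (r * M * real b)
        + s * (2 * d * hmin + d\<^sup>2) / (M * real b * real T)"
    using assms(2-4) by (simp add: field_simps)
  moreover have "s * r * hmin\<^sup>2 + r * (2 * d * hmin) + s * d\<^sup>2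
      = 2 * p\<^sup>2 * hmin\<^sup>2 + 2 * p * hmin * hmax + (p + 1) * hmax\<^sup>2"
    unfolding r_def s_def d_def power2_eq_square by algebra
  moreover have "2 * d * hmin + d\<^sup>2 = hmax\<^sup>2 - hmin\<^sup>2"
    unfolding d_def power2_eq_square by algebra
  ultimately show ?thesis
    by (simp add: r_def s_def mult_ac)
qed

lemma poly_lr_sums:
  fixes hmin hmax p :: real and T :: nat
  defines "d \<equiv> hmax - hmin"
    and "U1 \<equiv> \<Sum>t<T. (1 - real t / real T) powr p"
    and "U2 \<equiv> \<Sum>t<T. (1 - real t / real T) powr (2 * p)"
  shows "(\<Sum>t<T. poly_lr hmin hmax p T t) = d * U1 + real T * hmin"
    and "(\<Sum>t<T. (poly_lr hmin hmax p T t)\<^sup>2) = d\<^sup>2 * U2 + 2 * d * hmin * U1 + real T * hmin\<^sup>2"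
proof -
  have lr: "poly_lr hmin hmax p T t = d * (1 - real t / real T) powr p + hmin" for t
    by (simp add: poly_lr_def d_def)
  show "(\<Sum>t<T. poly_lr hmin hmax p T t) = d * U1 + real T * hmin"
    by (simp add: lr U1_def sum.distrib sum_distrib_left)
  have "((1 - real t / real T) powr p)\<^sup>2 = (1 - real t / real T) powr (2 * p)" for t
    by (simp add: power2_eq_square powr_add[symmetric])
  then show "(\<Sum>t<T. (poly_lr hmin hmax p T t)\<^sup>2) = d\<^sup>2 * U2 + 2 * d * hmin * U1 + real T * hmin\<^sup>2"
    by (simp add: lr U1_def U2_def power2_eq_square algebra_simps sum.distrib sum_distrib_left)
qed

lemma poly_lr_sum_bounds:
  fixes hmin hmax p :: real
  assumes p: "0 < p" and h: "0 \<le> hmin" "hmin \<le> hmax" and T: "1 \<le> T"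
  shows "real T * (p * hmin + hmax) / (p + 1) \<le> (\<Sum>t<T. poly_lr hmin hmax p T t)"
    and "(\<Sum>t<T. (poly_lr hmin hmax p T t)\<^sup>2) \<le> (hmax - hmin)\<^sup>2 * (real T / (2 * p + 1) + 1)
          + 2 * (hmax - hmin) * hmin * (real T / (p + 1) + 1) + real T * hmin\<^sup>2"
proof -
  define d where "d = hmax - hmin"
  note sums = poly_lr_sums[of hmin hmax p T, folded d_def]
  note U1 = sum_powr_bounds[OF p T]
  have U2: "(\<Sum>t<T. (1 - real t / real T) powr (2 * p)) \<le> real T / (2 * p + 1) + 1"
    using sum_powr_bounds(2)[of "2 * p" T] p T by simp
  have d: "0 \<le> d"
    using h by (simp add: d_def)
  have "real T * (p * hmin + hmax) / (p + 1) = d * (real T / (p + 1)) + real T * hmin"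
    using p by (simp add: d_def field_simps)
  then show "real T * (p * hmin + hmax) / (p + 1) \<le> (\<Sum>t<T. poly_lr hmin hmax p T t)"
    unfolding sums using mult_left_mono[OF U1(1) d] by simp
  show "(\<Sum>t<T. (poly_lr hmin hmax p T t)\<^sup>2) \<le> (hmax - hmin)\<^sup>2 * (real T / (2 * p + 1) + 1)
      + 2 * (hmax - hmin) * hmin * (real T / (p + 1) + 1) + real T * hmin\<^sup>2"
    unfolding sums d_def[symmetric] using U1 U2 d h by (intro add_mono mult_left_mono) auto
qed

lemma poly_lr_bounds:
  fixes hmin hmax p :: real
  assumes p: "0 < p" and h: "0 \<le> hmin" "hmin \<le> hmax"
    and sum_nonzero: "(\<Sum>t<T. poly_lr hmin hmax p T t) \<noteq> 0"
  shows "B_T (poly_lr hmin hmax p T) T \<le> (p + 1) / ((p * hmin + hmax) * real T)"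
    and "V_T (poly_lr hmin hmax p T) b T
           \<le> (2 * p\<^sup>2 * hmin\<^sup>2 + 2 * p * hmin * hmax + (p + 1) * hmax\<^sup>2)
               / ((2 * p + 1) * (p * hmin + hmax) * real b)
             + (p + 1) * (hmax\<^sup>2 - hmin\<^sup>2) / ((p * hmin + hmax) * real b * real T)"
proof -
  define d where "d = hmax - hmin"
  define M where "M = p * hmin + hmax"
  define N where "N = d\<^sup>2 * (real T / (2 * p + 1) + 1) + 2 * d * hmin * (real T / (p + 1) + 1)
      + real T * hmin\<^sup>2"
  have T: "1 \<le> T"
    using sum_nonzero by (cases T) auto
  note bounds = poly_lr_sum_bounds[OF p h T, folded d_def, folded M_def N_def]
  have "0 < hmax"
    using sum_nonzero h by (cases "hmax = 0") (auto simp: poly_lr_def)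
  then have "0 < M"
    using p h by (simp add: M_def add_nonneg_pos)
  then have low_pos: "0 < real T * M / (p + 1)"
    using T p by simp
  show "B_T (poly_lr hmin hmax p T) T \<le> (p + 1) / ((p * hmin + hmax) * real T)"
  proof -
    have "B_T (poly_lr hmin hmax p T) T \<le> 1 / (real T * M / (p + 1))"
      unfolding B_T_def using bounds(1) low_pos by (intro divide_left_mono mult_pos_pos) auto
    then show ?thesis
      by (simp add: M_def mult.commute)
  qed
  show "V_T (poly_lr hmin hmax p T) b T
      \<le> (2 * p\<^sup>2 * hmin\<^sup>2 + 2 * p * hmin * hmax + (p + 1) * hmax\<^sup>2)
          / ((2 * p + 1) * (p * hmin + hmax) * real b)
        + (p + 1) * (hmax\<^sup>2 - hmin\<^sup>2) / ((p * hmin + hmax) * real b * real T)"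
  proof (cases "b = 0")
    case False
    have "0 \<le> N"
      using bounds(2) by (meson order_trans sum_nonneg zero_le_power2)
    then have "V_T (poly_lr hmin hmax p T) b T \<le> N / (real b * (real T * M / (p + 1)))"
      unfolding V_T_def using bounds low_pos False
      by (intro frac_le mult_left_mono mult_pos_pos) auto
    also have "\<dots> = (2 * p\<^sup>2 * hmin\<^sup>2 + 2 * p * hmin * hmax + (p + 1) * hmax\<^sup>2)
          / ((2 * p + 1) * (p * hmin + hmax) * real b)
        + (p + 1) * (hmax\<^sup>2 - hmin\<^sup>2) / ((p * hmin + hmax) * real b * real T)"
      using p \<open>0 < M\<close> T False unfolding N_def d_def M_def[symmetric]
      by (rule poly_lr_variance_identity)
    finally show ?thesis .
  qed (simp add: V_T_def)
qed

theorem theorem1: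
  fixes P :: "'w measure" and D :: "'b measure"
    and n b :: nat
    and fs :: "nat \<Rightarrow> 'a::euclidean_space \<Rightarrow> real" and L :: "nat \<Rightarrow> real"
    and G :: "'b \<Rightarrow> 'a \<Rightarrow> 'a" and \<sigma> :: real
    and \<xi> :: "nat \<Rightarrow> nat \<Rightarrow> 'w \<Rightarrow> 'b"
    and \<theta>0 :: 'a and \<eta> :: "nat \<Rightarrow> real" and \<eta>min \<eta>max :: real
  defines "f \<equiv> (\<lambda>\<theta>. (1 / real n) * (\<Sum>i<n. fs i \<theta>))"
    and "Lbar \<equiv> (1 / real n) * (\<Sum>i<n. L i)"
    and "fstar \<equiv> (1 / real n) * (\<Sum>i<n. Inf (range (fs i)))"
  assumes P: "prob_space P"
    and n: "n \<ge> 1"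
    and A1: "\<forall>i<n. L i > 0 \<and> L_smooth (fs i) (L i) \<and> bdd_below (range (fs i))"
    and sigma: "\<sigma> \<ge> 0"
    and G_meas: "(\<lambda>(x, \<theta>). G x \<theta>) \<in> borel_measurable (D \<Otimes>\<^sub>M borel)"
    and A2_unbiased: "\<forall>\<theta>. integrable D (\<lambda>x. G x \<theta>) \<and> (\<integral>x. G x \<theta> \<partial>D) = grad f \<theta>"
    and A2_var: "\<forall>\<theta>. integrable D (\<lambda>x. (norm (G x \<theta> - grad f \<theta>))\<^sup>2)
                 \<and> (\<integral>x. (norm (G x \<theta> - grad f \<theta>))\<^sup>2 \<partial>D) \<le> \<sigma>\<^sup>2"
    and b: "b \<ge> 1"
    and A3_indep: "prob_space.indep_vars P (\<lambda>_. D) (\<lambda>(t, i). \<xi> t i) (UNIV \<times> {..<b})"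
    and A3_distr: "\<forall>t. \<forall>i<b. distr P D (\<xi> t i) = D"
    and lr_range: "\<forall>t. \<eta>min \<le> \<eta> t \<and> \<eta> t \<le> \<eta>max"
    and lr_min: "0 \<le> \<eta>min" and lr_max: "\<eta>max < 2 / Lbar"
    and lr_noninc: "\<forall>t. \<eta> (Suc t) \<le> \<eta> t"
  shows
    "(\<forall>T. (\<Sum>t<T. \<eta> t) \<noteq> 0 \<longrightarrow>
        (MIN t\<in>{..<T}. \<integral>\<^sup>+\<omega>. ennreal ((norm (grad f (sgd_iter \<theta>0 \<eta> b G \<xi> t \<omega>)))\<^sup>2) \<partial>P)
        \<le> ennreal (2 * (f \<theta>0 - fstar) / (2 - Lbar * \<eta>max) * B_T \<eta> T
                   + Lbar * \<sigma>\<^sup>2 / (2 - Lbar * \<eta>max) * V_T \<eta> b T))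
   \<and> (\<forall>hmax T. 0 \<le> hmax \<and> (\<Sum>t<T. const_lr hmax t) \<noteq> 0 \<longrightarrow>
        B_T (const_lr hmax) T \<le> 1 / (hmax * real T)
        \<and> V_T (const_lr hmax) b T \<le> hmax / real b)
   \<and> (\<forall>hmax T. 0 \<le> hmax \<and> (\<Sum>t<T. dimin_lr hmax t) \<noteq> 0 \<longrightarrow>
        B_T (dimin_lr hmax) T \<le> 1 / (2 * hmax * (sqrt (real T + 1) - 1))
        \<and> V_T (dimin_lr hmax) b T
            \<le> hmax * (1 + ln (real T)) / (2 * real b * (sqrt (real T + 1) - 1)))
   \<and> (\<forall>hmin hmax E. let K = nat \<lceil>real n / real b\<rceil>; T = K * E in
        0 \<le> hmin \<and> hmin \<le> hmax \<and> (\<Sum>t<T. cosine_lr hmin hmax K E t) \<noteq> 0 \<longrightarrow>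
        B_T (cosine_lr hmin hmax K E) T \<le> 2 / ((hmin + hmax) * real T)
        \<and> V_T (cosine_lr hmin hmax K E) b T
            \<le> (3 * hmin\<^sup>2 + 2 * hmin * hmax + 3 * hmax\<^sup>2) / (4 * (hmin + hmax) * real b)
              + (hmax - hmin) * real K / (real b * real T))
   \<and> (\<forall>hmin hmax p T. 0 < p \<and> 0 \<le> hmin \<and> hmin \<le> hmax
          \<and> (\<Sum>t<T. poly_lr hmin hmax p T t) \<noteq> 0 \<longrightarrow>
        B_T (poly_lr hmin hmax p T) T \<le> (p + 1) / ((p * hmin + hmax) * real T)
        \<and> V_T (poly_lr hmin hmax p T) b T
            \<le> (2 * p\<^sup>2 * hmin\<^sup>2 + 2 * p * hmin * hmax + (p + 1) * hmax\<^sup>2)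
                / ((2 * p + 1) * (p * hmin + hmax) * real b)
              + (p + 1) * (hmax\<^sup>2 - hmin\<^sup>2) / ((p * hmin + hmax) * real b * real T))"
proof -
  have smooth: "L_smooth f Lbar"
    unfolding f_def Lbar_def using A1 by (intro L_smooth_average) auto
  have lower_bound: "\<forall>x. fstar \<le> f x"
    unfolding fstar_def f_def using A1 by (auto intro!: divide_right_mono sum_mono cINF_lower)
  have "0 < Lbar"
    unfolding Lbar_def using A1 n by (intro mult_pos_pos sum_pos) (auto simp: lessThan_empty_iff)
  then have "Lbar * \<eta>max < 2"
    using lr_max by (simp add: field_simps)
  interpret minibatch_sgd P D b G \<xi> f Lbar fstar \<sigma>
    by (rule minibatch_sgd.intro[OF P minibatch_sgd_axioms.intro[OF b G_meas A2_unbiased A2_var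
          A3_indep A3_distr smooth lower_bound]])
  have lr: "\<forall>t. 0 \<le> \<eta> t \<and> \<eta> t \<le> \<eta>max"
    using lr_range lr_min by (meson order_trans)
  have K: "1 \<le> nat \<lceil>real n / real b\<rceil>"
    using n b by (simp add: Suc_le_eq)
  note bounds = min_expected_grad_norm_le[OF lr \<open>Lbar * \<eta>max < 2\<close>]
    dimin_lr_bounds cosine_lr_bounds[OF K] poly_lr_bounds
  show ?thesis
    unfolding Let_def
    by (intro conjI allI impI; (elim conjE)?)
      (assumption | rule bounds | simp add: B_T_const_lr V_T_const_lr)+
qed

end
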